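(* Let $a=\{a_1,\ldots,a_n\}$ be a list of positive integers. For $\epsilon\in\mathbb{R}$ define the quartic form in $x\in\mathbb{R}^n$ $$q^h_{a,\epsilon}(x):=\sum_i x_i^4+\Big(\big(\sum_i a_ix_i\big)^2-2\sum_i x_i^2\Big)\Big(\frac1n\sum_i x_i^2\Big)+(n-\epsilon)\Big(\frac1n\sum_i x_i^2\Big)^2,$$ equivalently $q^h_{a,\epsilon}(x)=p_a\!\left(x/(\frac1n\sum_i x_i^2)^{1/2}\right)(\frac1n\sum_i x_i^2)^2-\epsilon(\frac1n\sum_i x_i^2)^2$ where $p_a(x)=\sum_i(x_i^2-1)^2+(\sum_i a_ix_i)^2$. Then the partition instance $a$ is infeasible if and only if there exists $\epsilon>0$ for which $q^h_{a,\epsilon}(x)\ge 0$ for all $x\in\mathbb{R}^n$.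
   Context: A partition instance $a_1,\ldots,a_n$ (positive integers) is feasible if the index set $\{1,\ldots,n\}$ can be split into two sets $S_1,S_2$ with $\sum_{i\in S_1}a_i=\sum_{i\in S_2}a_i$, and infeasible otherwise. *)

theory Defs
  imports Main Complex_Main
begin

definition partition_feasible :: "nat \<Rightarrow> (nat \<Rightarrow> int) \<Rightarrow> bool" where
  "partition_feasible n a \<longleftrightarrow>
     (\<exists>S1 S2. S1 \<union> S2 = {1..n} \<and> S1 \<inter> S2 = {} \<and>
        (\<Sum>i\<in>S1. a i) = (\<Sum>i\<in>S2. a i))"

definition qh :: "nat \<Rightarrow> (nat \<Rightarrow> int) \<Rightarrow> real \<Rightarrow> (nat \<Rightarrow> real) \<Rightarrow> real" where
  "qh n a eps x =
     (let m = (1 / real n) * (\<Sum>i=1..n. (x i)^2) in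
      (\<Sum>i=1..n. (x i)^4)
      + ((\<Sum>i=1..n. of_int (a i) * x i)^2 - 2 * (\<Sum>i=1..n. (x i)^2)) * m
      + (real n - eps) * m^2)"

end

theory Submission
  imports Defs
begin

text \<open>Write \<open>m\<close> for the mean square of \<open>x\<close>. Expanding, \<open>q\<^sup>h(x) = \<Sum>(x\<^sub>i\<^sup>2 - m)\<^sup>2 + (\<Sum>a\<^sub>ix\<^sub>i)\<^sup>2 m - \<epsilon>m\<^sup>2\<close>,
  which for \<open>m > 0\<close> is \<open>m\<^sup>2 (p\<^sub>a(x/\<surd>m) - \<epsilon>)\<close>. A feasible instance gives a sign vector
  \<open>s \<in> {\<plusminus>1}\<^sup>n\<close> with \<open>p\<^sub>a(s) = 0\<close>, so \<open>q\<^sup>h(s) = -\<epsilon>\<close> for every \<open>\<epsilon>\<close>. Conversely, if the instance is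
  infeasible then \<open>p\<^sub>a \<ge> 1/(4A\<^sup>2)\<close> with \<open>A = \<Sum>a\<^sub>i\<close>: either some \<open>|y\<^sub>i\<^sup>2 - 1| \<ge> 1/(2A)\<close>, or every
  \<open>y\<^sub>i\<close> is within \<open>1/(2A)\<close> of its sign \<open>s\<^sub>i\<close>, and then \<open>\<Sum>a\<^sub>iy\<^sub>i\<close> is within \<open>1/2\<close> of the nonzero
  integer \<open>\<Sum>a\<^sub>is\<^sub>i\<close>.\<close>

definition mean_sq :: "nat \<Rightarrow> (nat \<Rightarrow> real) \<Rightarrow> real" where
  "mean_sq n x = (1 / real n) * (\<Sum>i=1..n. (x i)^2)"

definition partition_penalty :: "nat \<Rightarrow> (nat \<Rightarrow> int) \<Rightarrow> (nat \<Rightarrow> real) \<Rightarrow> real" where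
  "partition_penalty n a y = (\<Sum>i=1..n. (y i^2 - 1)^2) + (\<Sum>i=1..n. of_int (a i) * y i)^2"

definition sign_vector :: "(nat \<Rightarrow> bool) \<Rightarrow> nat \<Rightarrow> int" where
  "sign_vector P i = (if P i then 1 else -1)"

lemma sum_times_sign_vector:
  assumes "finite I"
  shows "(\<Sum>i\<in>I. a i * sign_vector P i) = (\<Sum>i\<in>{i\<in>I. P i}. a i) - (\<Sum>i\<in>{i\<in>I. \<not> P i}. a i)"
proof -
  have "(\<Sum>i\<in>I. a i * sign_vector P i) = (\<Sum>i\<in>I. if P i then a i else - a i)"
    by (rule sum.cong) (auto simp: sign_vector_def)
  also have "\<dots> = (\<Sum>i\<in>I \<inter> {i. P i}. a i) + (\<Sum>i\<in>I \<inter> - {i. P i}. - a i)"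
    by (rule sum.If_cases) (rule assms)
  finally show ?thesis
    by (simp add: sum_negf Collect_conj_eq Int_commute Compl_eq)
qed

lemma partition_feasible_iff_sign_vector:
  "partition_feasible n a \<longleftrightarrow> (\<exists>P. (\<Sum>i=1..n. a i * sign_vector P i) = 0)"
proof
  assume "partition_feasible n a"
  then obtain S1 S2 where S: "S1 \<union> S2 = {1..n}" "S1 \<inter> S2 = {}"
    "(\<Sum>i\<in>S1. a i) = (\<Sum>i\<in>S2. a i)"
    unfolding partition_feasible_def by blast
  have "{i\<in>{1..n}. i \<in> S1} = S1" "{i\<in>{1..n}. i \<notin> S1} = S2"
    using S(1,2) by auto
  then have "(\<Sum>i=1..n. a i * sign_vector (\<lambda>i. i \<in> S1) i) = 0"
    using S(3) by (simp add: sum_times_sign_vector)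
  then show "\<exists>P. (\<Sum>i=1..n. a i * sign_vector P i) = 0" by blast
next
  assume "\<exists>P. (\<Sum>i=1..n. a i * sign_vector P i) = 0"
  then obtain P where "(\<Sum>i=1..n. a i * sign_vector P i) = 0" ..
  then have "(\<Sum>i\<in>{i\<in>{1..n}. P i}. a i) = (\<Sum>i\<in>{i\<in>{1..n}. \<not> P i}. a i)"
    by (simp add: sum_times_sign_vector)
  moreover have "{i\<in>{1..n}. P i} \<union> {i\<in>{1..n}. \<not> P i} = {1..n}"
    and "{i\<in>{1..n}. P i} \<inter> {i\<in>{1..n}. \<not> P i} = {}"
    by auto
  ultimately show "partition_feasible n a"
    unfolding partition_feasible_def by blast
qed

lemma abs_diff_sign_le_abs_square_diff:
  fixes y :: real
  shows "\<bar>y - (if y \<ge> 0 then 1 else -1)\<bar> \<le> \<bar>y^2 - 1\<bar>"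
proof -
  have factor: "\<bar>y^2 - 1\<bar> = \<bar>y - 1\<bar> * \<bar>y + 1\<bar>"
    by (simp add: power2_eq_square abs_mult[symmetric] algebra_simps)
  show ?thesis
  proof (cases "y \<ge> 0")
    case True
    then have "\<bar>y - 1\<bar> * 1 \<le> \<bar>y - 1\<bar> * \<bar>y + 1\<bar>"
      by (intro mult_left_mono) auto
    with True factor show ?thesis by simp
  next
    case False
    then have "1 * \<bar>y + 1\<bar> \<le> \<bar>y - 1\<bar> * \<bar>y + 1\<bar>"
      by (intro mult_right_mono) auto
    with False factor show ?thesis by simp
  qed
qed

lemma abs_weighted_sum_minus_signs_le:
  fixes y :: "nat \<Rightarrow> real"
  assumes "\<forall>i\<in>I. a i \<ge> 0"
  shows "\<bar>(\<Sum>i\<in>I. of_int (a i) * y i) - of_int (\<Sum>i\<in>I. a i * sign_vector (\<lambda>i. y i \<ge> 0) i)\<bar>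
           \<le> (\<Sum>i\<in>I. of_int (a i) * \<bar>y i^2 - 1\<bar>)"
proof -
  let ?s = "\<lambda>i. real_of_int (sign_vector (\<lambda>i. y i \<ge> 0) i)"
  have "\<bar>(\<Sum>i\<in>I. of_int (a i) * y i) - of_int (\<Sum>i\<in>I. a i * sign_vector (\<lambda>i. y i \<ge> 0) i)\<bar>
        = \<bar>\<Sum>i\<in>I. of_int (a i) * (y i - ?s i)\<bar>"
    by (simp add: sum_subtractf algebra_simps)
  also have "\<dots> \<le> (\<Sum>i\<in>I. \<bar>of_int (a i) * (y i - ?s i)\<bar>)"
    by (rule sum_abs)
  also have "\<dots> \<le> (\<Sum>i\<in>I. of_int (a i) * \<bar>y i^2 - 1\<bar>)"
  proof (rule sum_mono)
    fix i assume "i \<in> I"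
    moreover have "\<bar>y i - ?s i\<bar> \<le> \<bar>y i^2 - 1\<bar>"
      using abs_diff_sign_le_abs_square_diff[of "y i"]
      by (auto simp: sign_vector_def split: if_splits)
    ultimately show "\<bar>of_int (a i) * (y i - ?s i)\<bar> \<le> of_int (a i) * \<bar>y i^2 - 1\<bar>"
      using assms by (simp add: abs_mult mult_left_mono)
  qed
  finally show ?thesis .
qed

lemma partition_penalty_lower_bound:
  fixes y :: "nat \<Rightarrow> real"
  assumes n: "n \<ge> 1" and pos: "\<forall>i\<in>{1..n}. a i > 0"
    and infeasible: "\<not> partition_feasible n a"
  defines "A \<equiv> real_of_int (\<Sum>i=1..n. a i)"
  shows "partition_penalty n a y \<ge> 1 / (4 * A^2)"
proof -
  have "a 1 \<le> (\<Sum>i=1..n. a i)"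
    using pos n by (intro member_le_sum) (auto intro: less_imp_le)
  moreover have "a 1 > 0" using pos n by auto
  ultimately
  have A_ge_1: "A \<ge> 1" unfolding A_def by linarith
  let ?D = "\<Sum>i=1..n. (y i^2 - 1)^2"
  let ?L = "\<Sum>i=1..n. of_int (a i) * y i"
  have D_nonneg: "?D \<ge> 0" by (intro sum_nonneg) simp
  show ?thesis
  proof (cases "\<exists>i\<in>{1..n}. \<bar>y i^2 - 1\<bar> \<ge> 1 / (2*A)")
    case True
    then obtain i where i: "i \<in> {1..n}" "1/(2*A) \<le> \<bar>y i^2 - 1\<bar>" by blast
    have "1/(4*A^2) = (1/(2*A))^2" by (simp add: power_divide power_mult_distrib)
    also have "\<dots> \<le> (y i^2 - 1)^2"
      using i(2) A_ge_1 power_mono[OF i(2), of 2] by simp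
    also have "\<dots> \<le> ?D"
      using i(1) by (intro member_le_sum) auto
    finally show ?thesis
      unfolding partition_penalty_def by (simp add: add_increasing2)
  next
    case False
    define K where "K = (\<Sum>i=1..n. a i * sign_vector (\<lambda>i. y i \<ge> 0) i)"
    have "K \<noteq> 0"
      using infeasible unfolding K_def partition_feasible_iff_sign_vector by blast
    then have K_ge_1: "\<bar>real_of_int K\<bar> \<ge> 1" by linarith
    have "\<bar>?L - of_int K\<bar> \<le> (\<Sum>i=1..n. of_int (a i) * \<bar>y i^2 - 1\<bar>)"
      unfolding K_def using pos by (intro abs_weighted_sum_minus_signs_le) auto
    also have "\<dots> < (\<Sum>i=1..n. of_int (a i) * (1/(2*A)))"
      using False pos n by (intro sum_strict_mono mult_strict_left_mono) (auto simp: not_le)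
    also have "\<dots> = A * (1/(2*A))"
      by (simp only: sum_distrib_right[symmetric] A_def of_int_sum)
    also have "\<dots> = 1/2"
      using A_ge_1 by simp
    finally have "\<bar>?L\<bar> \<ge> 1/2" using K_ge_1 by linarith
    then have "1/4 \<le> ?L^2"
      using power_mono[of "1/2" "\<bar>?L\<bar>" 2] by (simp add: power_divide)
    moreover have "1/(4*A^2) \<le> 1/4"
      using A_ge_1 by (simp add: divide_le_eq one_le_power)
    ultimately show ?thesis
      using D_nonneg unfolding partition_penalty_def by linarith
  qed
qed

lemma qh_eq_deviation_form:
  "qh n a eps x = (\<Sum>i=1..n. (x i^2 - mean_sq n x)^2)
                  + (\<Sum>i=1..n. of_int (a i) * x i)^2 * mean_sq n x - eps * (mean_sq n x)^2"
proof -
  define m where "m = mean_sq n x"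
  have "(\<Sum>i=1..n. (x i^2 - m)^2) = (\<Sum>i=1..n. x i^4 - 2*m*x i^2 + m^2)"
    by (rule sum.cong) (auto simp: power2_eq_square power4_eq_xxxx algebra_simps)
  also have "\<dots> = (\<Sum>i=1..n. x i^4) - 2*m*(\<Sum>i=1..n. x i^2) + real n * m^2"
    by (simp add: sum.distrib sum_subtractf sum_distrib_left)
  finally show ?thesis
    unfolding qh_def Let_def m_def[symmetric] mean_sq_def[symmetric]
    by (simp add: algebra_simps)
qed

lemma qh_eq_scaled_penalty:
  assumes "mean_sq n x > 0"
  shows "qh n a eps x
         = (mean_sq n x)^2 * (partition_penalty n a (\<lambda>i. x i / sqrt (mean_sq n x)) - eps)"
proof -
  define m where "m = mean_sq n x"
  have m: "m > 0" "sqrt m ^ 2 = m" using assms by (simp_all add: m_def)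
  have "(\<Sum>i=1..n. ((x i / sqrt m)^2 - 1)^2) = (\<Sum>i=1..n. (x i^2 - m)^2) / m^2"
    unfolding sum_divide_distrib
    by (rule sum.cong) (use m in \<open>simp_all add: power_divide field_simps\<close>)
  moreover have "(\<Sum>i=1..n. of_int (a i) * (x i / sqrt m))^2 = (\<Sum>i=1..n. of_int (a i) * x i)^2 / m"
    by (simp add: sum_divide_distrib[symmetric] power_divide m(2))
  ultimately show ?thesis
    using m(1) unfolding qh_eq_deviation_form partition_penalty_def m_def[symmetric]
    by (simp add: field_simps power2_eq_square)
qed

lemma qh_nonneg_if_penalty_ge:
  assumes "\<And>y. partition_penalty n a y \<ge> eps"
  shows "qh n a eps x \<ge> 0"
proof (cases "mean_sq n x > 0")
  case True
  then show ?thesis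
    using assms by (simp add: qh_eq_scaled_penalty)
next
  case False
  moreover have "mean_sq n x \<ge> 0"
    unfolding mean_sq_def by (intro mult_nonneg_nonneg sum_nonneg) auto
  ultimately have "mean_sq n x = 0" by simp
  then show ?thesis
    unfolding qh_eq_deviation_form by (simp add: sum_nonneg)
qed

lemma qh_sign_vector:
  assumes "n \<ge> 1"
  shows "qh n a eps (\<lambda>i. of_int (sign_vector P i))
         = (of_int (\<Sum>i=1..n. a i * sign_vector P i))^2 - eps"
proof -
  have sq: "(real_of_int (sign_vector P i))^2 = 1" for i
    by (simp add: sign_vector_def)
  then have "mean_sq n (\<lambda>i. of_int (sign_vector P i)) = 1"
    using assms by (simp add: mean_sq_def)
  then show ?thesis
    unfolding qh_eq_deviation_form by (simp add: sq)
qed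

theorem theorem5p3:
  fixes n :: nat and a :: "nat \<Rightarrow> int"
  assumes "n \<ge> 1"
    and "\<forall>i\<in>{1..n}. a i > 0"
  shows "\<not> partition_feasible n a \<longleftrightarrow> (\<exists>eps>0. \<forall>x. qh n a eps x \<ge> 0)"
proof
  assume infeasible: "\<not> partition_feasible n a"
  define A where "A = real_of_int (\<Sum>i=1..n. a i)"
  have "A > 0"
    using assms unfolding A_def of_int_sum by (intro sum_pos) auto
  moreover have "\<And>x. qh n a (1 / (4 * A^2)) x \<ge> 0"
    using partition_penalty_lower_bound[OF assms infeasible]
    unfolding A_def by (intro qh_nonneg_if_penalty_ge)
  ultimately show "\<exists>eps>0. \<forall>x. qh n a eps x \<ge> 0"
    by (intro exI[of _ "1 / (4 * A^2)"]) simp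
next
  assume "\<exists>eps>0. \<forall>x. qh n a eps x \<ge> 0"
  then obtain eps where eps: "eps > 0" "\<And>x. qh n a eps x \<ge> 0" by blast
  have "(\<Sum>i=1..n. a i * sign_vector P i) \<noteq> 0" for P
  proof
    assume "(\<Sum>i=1..n. a i * sign_vector P i) = 0"
    then have "qh n a eps (\<lambda>i. of_int (sign_vector P i)) = - eps"
      by (simp add: qh_sign_vector[OF assms(1)])
    with eps show False by (metis neg_less_0_iff_less not_le)
  qed
  then show "\<not> partition_feasible n a"
    unfolding partition_feasible_iff_sign_vector by blast
qed

end
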